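(* Let $A$ and $B$ be categories with variances, let $(R_1,L_1)$ be a span on $A$ and $(R_2,L_2)$ a span on $B$, and let $F\colon A\times B\rightarrow C$ be a functor of variance with respect to the product variance on $A\times B$. Assume that for every object $y$ of $B$ the end $[\int_{L_1}F](y):=\int_{L_1}F^y$ exists, with universal wedge $\omega^y=(\omega^y_a\colon \int_{L_1}F^y\rightarrow F(L_1(a),y))_{a\in R_1}$. Then the object assignment $y\mapsto [\int_{L_1}F](y)$ extends uniquely to a functor of variance $\int_{L_1}F\colon B\rightarrow C$ such that for every object $a$ of $R_1$ and every morphism $g$ of $B$, $$F(id_{L_1(a)},g)\circ \omega^{g_s}_a = \omega^{g_t}_a\circ [\textstyle\int_{L_1}F](g)$$ as morphisms $[\int_{L_1}F](g_s)\rightarrow F(L_1(a),g_t)$.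
   Context: A variance on a category $A$ is a pair $(E,M)$ of subcategories containing all objects such that every morphism $f$ factors uniquely as $f=me$ and uniquely as $f=e'm'$ with $e,e'$ in $E$ (covariant morphisms) and $m,m'$ in $M$ (contravariant morphisms). For $f\colon x\rightarrow y$ write $f=f^mf^e$ with $f^e\colon x\rightarrow f_t$ in $E$, $f^m\colon f_t\rightarrow y$ in $M$, and $f=f_ef_m$ with $f_m\colon x\rightarrow f_s$ in $M$, $f_e\colon f_s\rightarrow y$ in $E$. A functor $F\colon A\rightarrow C$ of variance $(E,M)$ assigns objects to objects and to each morphism $f$ a morphism $F(f)\colon F(f_s)\rightarrow F(f_t)$, preserving identities and satisfying, for composable $x\xrightarrow{f}y\xrightarrow{g}z$, $F(gf)=F((g^ef^m)^e)F(f)F((g_mf_e)_m)=F((g^ef^m)^m)F(g)F((g_mf_e)_e)$. The product variance on $A\times B$: a morphism $(f,g)$ is covariant (resp. contravariant) iff $f$ and $g$ both are. For $F\colon A\times B\rightarrow C$ of variance and objects $y$ of $B$, $F^y\colon A\rightarrow C$ is the functor of variance $F^y(x)=F(x,y)$, $F^y(f)=F(f,id_y)$. A span on $A$ is a pair $(R,L)$ of a category $R$ and a functor $L\colon R\rightarrow A$. For a functor of variance $G\colon A\rightarrow C$, an $L$-wedge of $G$ is a pair $(c,\eta)$ with $c$ an object of $C$ and $\eta=(\eta_x\colon c\rightarrow G(Lx))_{x\in R}$ satisfying $G(L(f)^e)\eta_x=G(L(f)^m)\eta_y$ for every morphism $f\colon x\rightarrow y$ of $R$; a morphism $(c,\eta)\rightarrow(d,\theta)$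 of $L$-wedges is $h\colon c\rightarrow d$ with $\theta_x h=\eta_x$ for all $x$. The end $\int_L G$ is a terminal $L$-wedge, whose family is called the universal wedge. *)

theory Defs
  imports Main
begin

record ('o, 'm) cat =
  Obj  :: "'o set"
  Arr  :: "'m set"
  Dom  :: "'m \<Rightarrow> 'o"
  Cod  :: "'m \<Rightarrow> 'o"
  Comp :: "'m \<Rightarrow> 'm \<Rightarrow> 'm"   (* Comp C g f = g \<circ> f, defined when Cod f = Dom g *)
  Idm  :: "'o \<Rightarrow> 'm"

definition is_cat :: "('o, 'm, 'z) cat_scheme \<Rightarrow> bool" where
  "is_cat C \<longleftrightarrow>
     (\<forall>f\<in>Arr C. Dom C f \<in> Obj C \<and> Cod C f \<in> Obj C) \<and>
     (\<forall>x\<in>Obj C. Idm C x \<in> Arr C \<and> Dom C (Idm C x) = x \<and> Cod C (Idm C x) = x) \<and>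
     (\<forall>f\<in>Arr C. \<forall>g\<in>Arr C. Cod C f = Dom C g \<longrightarrow>
        Comp C g f \<in> Arr C \<and> Dom C (Comp C g f) = Dom C f \<and> Cod C (Comp C g f) = Cod C g) \<and>
     (\<forall>f\<in>Arr C. Comp C f (Idm C (Dom C f)) = f \<and> Comp C (Idm C (Cod C f)) f = f) \<and>
     (\<forall>f\<in>Arr C. \<forall>g\<in>Arr C. \<forall>h\<in>Arr C. Cod C f = Dom C g \<and> Cod C g = Dom C h \<longrightarrow>
        Comp C h (Comp C g f) = Comp C (Comp C h g) f)"

definition is_functor ::
  "('a, 'b, 'z1) cat_scheme \<Rightarrow> ('c, 'd, 'z2) cat_scheme \<Rightarrow> ('a \<Rightarrow> 'c) \<Rightarrow> ('b \<Rightarrow> 'd) \<Rightarrow> bool" where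
  "is_functor R A Lo Lm \<longleftrightarrow>
     (\<forall>x\<in>Obj R. Lo x \<in> Obj A) \<and>
     (\<forall>f\<in>Arr R. Lm f \<in> Arr A \<and> Dom A (Lm f) = Lo (Dom R f) \<and> Cod A (Lm f) = Lo (Cod R f)) \<and>
     (\<forall>x\<in>Obj R. Lm (Idm R x) = Idm A (Lo x)) \<and>
     (\<forall>f\<in>Arr R. \<forall>g\<in>Arr R. Cod R f = Dom R g \<longrightarrow> Lm (Comp R g f) = Comp A (Lm g) (Lm f))"

record ('o, 'm) vcat = "('o, 'm) cat" +
  Cov    :: "'m set"
  Contra :: "'m set"

definition is_subcat_all_obj :: "('o, 'm, 'z) cat_scheme \<Rightarrow> 'm set \<Rightarrow> bool" where
  "is_subcat_all_obj C S \<longleftrightarrow> S \<subseteq> Arr C \<and> (\<forall>x\<in>Obj C. Idm C x \<in> S) \<and>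
     (\<forall>f\<in>S. \<forall>g\<in>S. Cod C f = Dom C g \<longrightarrow> Comp C g f \<in> S)"

definition is_EM_fact :: "('o, 'm, 'z) vcat_scheme \<Rightarrow> 'm \<Rightarrow> 'm \<times> 'm \<Rightarrow> bool" where
  "is_EM_fact A f p \<longleftrightarrow> (case p of (e, m) \<Rightarrow>
     e \<in> Cov A \<and> m \<in> Contra A \<and> Dom A e = Dom A f \<and> Cod A e = Dom A m \<and>
     Cod A m = Cod A f \<and> Comp A m e = f)"

definition is_ME_fact :: "('o, 'm, 'z) vcat_scheme \<Rightarrow> 'm \<Rightarrow> 'm \<times> 'm \<Rightarrow> bool" where
  "is_ME_fact A f p \<longleftrightarrow> (case p of (m, e) \<Rightarrow>
     m \<in> Contra A \<and> e \<in> Cov A \<and> Dom A m = Dom A f \<and> Cod A m = Dom A e \<and>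
     Cod A e = Cod A f \<and> Comp A e m = f)"

definition is_vcat :: "('o, 'm, 'z) vcat_scheme \<Rightarrow> bool" where
  "is_vcat A \<longleftrightarrow> is_cat A \<and> is_subcat_all_obj A (Cov A) \<and> is_subcat_all_obj A (Contra A) \<and>
     (\<forall>f\<in>Arr A. \<exists>!p. is_EM_fact A f p) \<and> (\<forall>f\<in>Arr A. \<exists>!p. is_ME_fact A f p)"

text \<open>f = f^m f^e  and  f = f_e f_m.\<close>
definition up_e :: "('o, 'm, 'z) vcat_scheme \<Rightarrow> 'm \<Rightarrow> 'm" where
  "up_e A f = fst (THE p. is_EM_fact A f p)"
definition up_m :: "('o, 'm, 'z) vcat_scheme \<Rightarrow> 'm \<Rightarrow> 'm" where
  "up_m A f = snd (THE p. is_EM_fact A f p)"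
definition lo_m :: "('o, 'm, 'z) vcat_scheme \<Rightarrow> 'm \<Rightarrow> 'm" where
  "lo_m A f = fst (THE p. is_ME_fact A f p)"
definition lo_e :: "('o, 'm, 'z) vcat_scheme \<Rightarrow> 'm \<Rightarrow> 'm" where
  "lo_e A f = snd (THE p. is_ME_fact A f p)"

text \<open>f_t (target of f^e) and f_s (target of f_m).\<close>
definition tgt_v :: "('o, 'm, 'z) vcat_scheme \<Rightarrow> 'm \<Rightarrow> 'o" where
  "tgt_v A f = Cod A (up_e A f)"
definition src_v :: "('o, 'm, 'z) vcat_scheme \<Rightarrow> 'm \<Rightarrow> 'o" where
  "src_v A f = Cod A (lo_m A f)"

definition is_var_functor ::
  "('a, 'b, 'z1) vcat_scheme \<Rightarrow> ('c, 'd, 'z2) cat_scheme \<Rightarrow> ('a \<Rightarrow> 'c) \<Rightarrow> ('b \<Rightarrow> 'd) \<Rightarrow> bool" where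
  "is_var_functor A C Fo Fm \<longleftrightarrow>
     (\<forall>x\<in>Obj A. Fo x \<in> Obj C) \<and>
     (\<forall>f\<in>Arr A. Fm f \<in> Arr C \<and> Dom C (Fm f) = Fo (src_v A f) \<and> Cod C (Fm f) = Fo (tgt_v A f)) \<and>
     (\<forall>x\<in>Obj A. Fm (Idm A x) = Idm C (Fo x)) \<and>
     (\<forall>f\<in>Arr A. \<forall>g\<in>Arr A. Cod A f = Dom A g \<longrightarrow>
        Fm (Comp A g f) =
          Comp C (Comp C (Fm (up_e A (Comp A (up_e A g) (up_m A f)))) (Fm f))
                 (Fm (lo_m A (Comp A (lo_m A g) (lo_e A f)))) \<and>
        Fm (Comp A g f) =
          Comp C (Comp C (Fm (up_m A (Comp A (up_e A g) (up_m A f)))) (Fm g))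
                 (Fm (lo_e A (Comp A (lo_m A g) (lo_e A f)))))"

definition prod_vcat :: "('a, 'b, 'z1) vcat_scheme \<Rightarrow> ('c, 'd, 'z2) vcat_scheme \<Rightarrow> ('a \<times> 'c, 'b \<times> 'd) vcat" where
  "prod_vcat A B =
     \<lparr> Obj = Obj A \<times> Obj B,
       Arr = Arr A \<times> Arr B,
       Dom = (\<lambda>(f, g). (Dom A f, Dom B g)),
       Cod = (\<lambda>(f, g). (Cod A f, Cod B g)),
       Comp = (\<lambda>(f2, g2) (f1, g1). (Comp A f2 f1, Comp B g2 g1)),
       Idm = (\<lambda>(x, y). (Idm A x, Idm B y)),
       Cov = Cov A \<times> Cov B,
       Contra = Contra A \<times> Contra B \<rparr>"

definition part_obj :: "('a \<times> 'c \<Rightarrow> 'e) \<Rightarrow> 'c \<Rightarrow> 'a \<Rightarrow> 'e" where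
  "part_obj Fo y = (\<lambda>x. Fo (x, y))"
definition part_arr :: "('c, 'd, 'z) cat_scheme \<Rightarrow> ('b \<times> 'd \<Rightarrow> 'f) \<Rightarrow> 'c \<Rightarrow> 'b \<Rightarrow> 'f" where
  "part_arr B Fm y = (\<lambda>f. Fm (f, Idm B y))"

definition is_wedge ::
  "('r, 's, 'z0) cat_scheme \<Rightarrow> ('r \<Rightarrow> 'a) \<Rightarrow> ('s \<Rightarrow> 'b) \<Rightarrow>
   ('a, 'b, 'z1) vcat_scheme \<Rightarrow> ('c, 'd, 'z2) cat_scheme \<Rightarrow> ('a \<Rightarrow> 'c) \<Rightarrow> ('b \<Rightarrow> 'd) \<Rightarrow>
   'c \<Rightarrow> ('r \<Rightarrow> 'd) \<Rightarrow> bool" where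
  "is_wedge R Lo Lm A C Go Gm c \<eta> \<longleftrightarrow>
     c \<in> Obj C \<and>
     (\<forall>x\<in>Obj R. \<eta> x \<in> Arr C \<and> Dom C (\<eta> x) = c \<and> Cod C (\<eta> x) = Go (Lo x)) \<and>
     (\<forall>f\<in>Arr R. Comp C (Gm (up_e A (Lm f))) (\<eta> (Dom R f)) =
                 Comp C (Gm (up_m A (Lm f))) (\<eta> (Cod R f)))"

definition is_end ::
  "('r, 's, 'z0) cat_scheme \<Rightarrow> ('r \<Rightarrow> 'a) \<Rightarrow> ('s \<Rightarrow> 'b) \<Rightarrow>
   ('a, 'b, 'z1) vcat_scheme \<Rightarrow> ('c, 'd, 'z2) cat_scheme \<Rightarrow> ('a \<Rightarrow> 'c) \<Rightarrow> ('b \<Rightarrow> 'd) \<Rightarrow>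
   'c \<Rightarrow> ('r \<Rightarrow> 'd) \<Rightarrow> bool" where
  "is_end R Lo Lm A C Go Gm c \<eta> \<longleftrightarrow>
     is_wedge R Lo Lm A C Go Gm c \<eta> \<and>
     (\<forall>d \<theta>. is_wedge R Lo Lm A C Go Gm d \<theta> \<longrightarrow>
        (\<exists>!h. h \<in> Arr C \<and> Dom C h = d \<and> Cod C h = c \<and> (\<forall>x\<in>Obj R. Comp C (\<eta> x) h = \<theta> x)))"

end

theory Submission
  imports Defs
begin

text \<open>
  Let g be a morphism of B with (variance) source s and target t.  Composing the universal wedge
  \<open>\<omega>\<^sup>s\<close> with the components \<open>F(id, g)\<close> gives an \<open>L\<^sub>1\<close>-wedge of \<open>F\<^sup>t\<close>: its wedge condition is
  the interchange law \<open>F(e, id) F(id, g) = F(id, g) F(e, id)\<close>, which holds because both sides equal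
  \<open>F(e, g)\<close> by the two composition laws of F for the product variance.  Its unique factorisation
  through \<open>\<omega>\<^sup>t\<close> is \<open>[\<integral>F](g)\<close>; the factorisation property is exactly the required naturality
  square, so this is also the only possible choice.  Since morphisms into an end are determined by
  their composites with the universal wedge, the identity and composition laws of \<open>\<integral>F\<close> follow
  by pasting naturality squares from those of \<open>F(id, -)\<close>.
\<close>

section \<open>Categories with variance\<close>

locale category =
  fixes C :: "('o, 'm, 'z) cat_scheme"
  assumes is_cat: "is_cat C"
begin

lemma dom_obj [simp]: "f \<in> Arr C \<Longrightarrow> Dom C f \<in> Obj C"
  and cod_obj [simp]: "f \<in> Arr C \<Longrightarrow> Cod C f \<in> Obj C"
  and id_arr [simp]: "x \<in> Obj C \<Longrightarrow> Idm C x \<in> Arr C"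
  and dom_id [simp]: "x \<in> Obj C \<Longrightarrow> Dom C (Idm C x) = x"
  and cod_id [simp]: "x \<in> Obj C \<Longrightarrow> Cod C (Idm C x) = x"
  using is_cat unfolding is_cat_def by auto

lemma comp_arr [simp]: "\<lbrakk>f \<in> Arr C; g \<in> Arr C; Cod C f = Dom C g\<rbrakk> \<Longrightarrow> Comp C g f \<in> Arr C"
  and dom_comp [simp]: "\<lbrakk>f \<in> Arr C; g \<in> Arr C; Cod C f = Dom C g\<rbrakk> \<Longrightarrow> Dom C (Comp C g f) = Dom C f"
  and cod_comp [simp]: "\<lbrakk>f \<in> Arr C; g \<in> Arr C; Cod C f = Dom C g\<rbrakk> \<Longrightarrow> Cod C (Comp C g f) = Cod C g"
  using is_cat unfolding is_cat_def by auto

lemma comp_id_right [simp]: "\<lbrakk>f \<in> Arr C; x = Dom C f\<rbrakk> \<Longrightarrow> Comp C f (Idm C x) = f"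
  and comp_id_left [simp]: "\<lbrakk>f \<in> Arr C; x = Cod C f\<rbrakk> \<Longrightarrow> Comp C (Idm C x) f = f"
  using is_cat unfolding is_cat_def by auto

lemma Comp_assoc:
  "\<lbrakk>f \<in> Arr C; g \<in> Arr C; h \<in> Arr C; Cod C f = Dom C g; Cod C g = Dom C h\<rbrakk>
   \<Longrightarrow> Comp C h (Comp C g f) = Comp C (Comp C h g) f"
  using is_cat unfolding is_cat_def by auto

end

locale variance_category =
  fixes A :: "('o, 'm, 'z) vcat_scheme"
  assumes is_vcat: "is_vcat A"
begin

sublocale category A
  using is_vcat unfolding is_vcat_def by unfold_locales blast

lemma cov_arr [simp]: "e \<in> Cov A \<Longrightarrow> e \<in> Arr A"
  and contra_arr [simp]: "m \<in> Contra A \<Longrightarrow> m \<in> Arr A"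
  and id_cov [simp]: "x \<in> Obj A \<Longrightarrow> Idm A x \<in> Cov A"
  and id_contra [simp]: "x \<in> Obj A \<Longrightarrow> Idm A x \<in> Contra A"
  and cov_comp [simp]: "\<lbrakk>e \<in> Cov A; e' \<in> Cov A; Cod A e = Dom A e'\<rbrakk> \<Longrightarrow> Comp A e' e \<in> Cov A"
  and contra_comp [simp]: "\<lbrakk>m \<in> Contra A; m' \<in> Contra A; Cod A m = Dom A m'\<rbrakk> \<Longrightarrow> Comp A m' m \<in> Contra A"
  using is_vcat unfolding is_vcat_def is_subcat_all_obj_def by auto

lemma EM_fact_up: "f \<in> Arr A \<Longrightarrow> is_EM_fact A f (up_e A f, up_m A f)"
  using is_vcat theI'[of "is_EM_fact A f"] unfolding is_vcat_def up_e_def up_m_def by auto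

lemma EM_fact_unique: "\<lbrakk>f \<in> Arr A; is_EM_fact A f p\<rbrakk> \<Longrightarrow> p = (up_e A f, up_m A f)"
  using is_vcat EM_fact_up unfolding is_vcat_def by blast

lemma ME_fact_lo: "f \<in> Arr A \<Longrightarrow> is_ME_fact A f (lo_m A f, lo_e A f)"
  using is_vcat theI'[of "is_ME_fact A f"] unfolding is_vcat_def lo_m_def lo_e_def by auto

lemma ME_fact_unique: "\<lbrakk>f \<in> Arr A; is_ME_fact A f p\<rbrakk> \<Longrightarrow> p = (lo_m A f, lo_e A f)"
  using is_vcat ME_fact_lo unfolding is_vcat_def by blast

lemma up_e_in_Cov [simp]: "f \<in> Arr A \<Longrightarrow> up_e A f \<in> Cov A"
  and up_m_in_Contra [simp]: "f \<in> Arr A \<Longrightarrow> up_m A f \<in> Contra A"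
  and dom_up_e [simp]: "f \<in> Arr A \<Longrightarrow> Dom A (up_e A f) = Dom A f"
  and cod_up_e [simp]: "f \<in> Arr A \<Longrightarrow> Cod A (up_e A f) = tgt_v A f"
  and dom_up_m [simp]: "f \<in> Arr A \<Longrightarrow> Dom A (up_m A f) = tgt_v A f"
  and cod_up_m [simp]: "f \<in> Arr A \<Longrightarrow> Cod A (up_m A f) = Cod A f"
  and comp_up_m_up_e: "f \<in> Arr A \<Longrightarrow> Comp A (up_m A f) (up_e A f) = f"
  using EM_fact_up unfolding is_EM_fact_def tgt_v_def by auto

lemma lo_m_in_Contra [simp]: "f \<in> Arr A \<Longrightarrow> lo_m A f \<in> Contra A"
  and lo_e_in_Cov [simp]: "f \<in> Arr A \<Longrightarrow> lo_e A f \<in> Cov A"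
  and dom_lo_m [simp]: "f \<in> Arr A \<Longrightarrow> Dom A (lo_m A f) = Dom A f"
  and cod_lo_m [simp]: "f \<in> Arr A \<Longrightarrow> Cod A (lo_m A f) = src_v A f"
  and dom_lo_e [simp]: "f \<in> Arr A \<Longrightarrow> Dom A (lo_e A f) = src_v A f"
  and cod_lo_e [simp]: "f \<in> Arr A \<Longrightarrow> Cod A (lo_e A f) = Cod A f"
  and comp_lo_e_lo_m: "f \<in> Arr A \<Longrightarrow> Comp A (lo_e A f) (lo_m A f) = f"
  using ME_fact_lo unfolding is_ME_fact_def src_v_def by auto

lemma tgt_v_obj [simp]: "f \<in> Arr A \<Longrightarrow> tgt_v A f \<in> Obj A"
  and src_v_obj [simp]: "f \<in> Arr A \<Longrightarrow> src_v A f \<in> Obj A"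
  using cod_obj[of "up_e A f"] cod_obj[of "lo_m A f"] by simp_all

lemma up_e_cov [simp]: "e \<in> Cov A \<Longrightarrow> up_e A e = e"
  and up_m_cov [simp]: "e \<in> Cov A \<Longrightarrow> up_m A e = Idm A (Cod A e)"
  using EM_fact_unique[of e "(e, Idm A (Cod A e))"] unfolding is_EM_fact_def by auto

lemma up_e_contra [simp]: "m \<in> Contra A \<Longrightarrow> up_e A m = Idm A (Dom A m)"
  and up_m_contra [simp]: "m \<in> Contra A \<Longrightarrow> up_m A m = m"
  using EM_fact_unique[of m "(Idm A (Dom A m), m)"] unfolding is_EM_fact_def by auto

lemma lo_m_cov [simp]: "e \<in> Cov A \<Longrightarrow> lo_m A e = Idm A (Dom A e)"
  and lo_e_cov [simp]: "e \<in> Cov A \<Longrightarrow> lo_e A e = e"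
  using ME_fact_unique[of e "(Idm A (Dom A e), e)"] unfolding is_ME_fact_def by auto

lemma lo_m_contra [simp]: "m \<in> Contra A \<Longrightarrow> lo_m A m = m"
  and lo_e_contra [simp]: "m \<in> Contra A \<Longrightarrow> lo_e A m = Idm A (Cod A m)"
  using ME_fact_unique[of m "(m, Idm A (Cod A m))"] unfolding is_ME_fact_def by auto

lemma tgt_v_cov [simp]: "e \<in> Cov A \<Longrightarrow> tgt_v A e = Cod A e"
  and src_v_cov [simp]: "e \<in> Cov A \<Longrightarrow> src_v A e = Dom A e"
  and tgt_v_contra [simp]: "m \<in> Contra A \<Longrightarrow> tgt_v A m = Dom A m"
  and src_v_contra [simp]: "m \<in> Contra A \<Longrightarrow> src_v A m = Cod A m"
  unfolding tgt_v_def src_v_def by simp_all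

lemma up_comp:
  assumes f: "f \<in> Arr A" and g: "g \<in> Arr A" and fg: "Cod A f = Dom A g"
  defines "j \<equiv> Comp A (up_e A g) (up_m A f)"
  shows "up_e A (Comp A g f) = Comp A (up_e A j) (up_e A f)"
    and "up_m A (Comp A g f) = Comp A (up_m A g) (up_m A j)"
proof -
  have j: "j \<in> Arr A" "Dom A j = tgt_v A f" "Cod A j = tgt_v A g"
    using f g fg unfolding j_def by simp_all
  have "Comp A (Comp A (up_m A g) (up_m A j)) (Comp A (up_e A j) (up_e A f))
      = Comp A (up_m A g) (Comp A (Comp A (up_m A j) (up_e A j)) (up_e A f))"
    using f g j by (simp add: Comp_assoc)
  also have "\<dots> = Comp A (up_m A g) (Comp A j (up_e A f))"
    using j by (simp only: comp_up_m_up_e)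
  also have "\<dots> = Comp A (Comp A (up_m A g) (up_e A g)) (Comp A (up_m A f) (up_e A f))"
    using f g fg by (simp add: j_def Comp_assoc)
  also have "\<dots> = Comp A g f"
    using f g by (simp add: comp_up_m_up_e)
  finally have "is_EM_fact A (Comp A g f) (Comp A (up_e A j) (up_e A f), Comp A (up_m A g) (up_m A j))"
    using f g fg j unfolding is_EM_fact_def by simp
  from EM_fact_unique[OF _ this] f g fg
  show "up_e A (Comp A g f) = Comp A (up_e A j) (up_e A f)"
    and "up_m A (Comp A g f) = Comp A (up_m A g) (up_m A j)" by simp_all
qed

lemma lo_comp:
  assumes f: "f \<in> Arr A" and g: "g \<in> Arr A" and fg: "Cod A f = Dom A g"
  defines "k \<equiv> Comp A (lo_m A g) (lo_e A f)"
  shows "lo_m A (Comp A g f) = Comp A (lo_m A k) (lo_m A f)"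
    and "lo_e A (Comp A g f) = Comp A (lo_e A g) (lo_e A k)"
proof -
  have k: "k \<in> Arr A" "Dom A k = src_v A f" "Cod A k = src_v A g"
    using f g fg unfolding k_def by simp_all
  have "Comp A (Comp A (lo_e A g) (lo_e A k)) (Comp A (lo_m A k) (lo_m A f))
      = Comp A (lo_e A g) (Comp A (Comp A (lo_e A k) (lo_m A k)) (lo_m A f))"
    using f g k by (simp add: Comp_assoc)
  also have "\<dots> = Comp A (lo_e A g) (Comp A k (lo_m A f))"
    using k by (simp only: comp_lo_e_lo_m)
  also have "\<dots> = Comp A (Comp A (lo_e A g) (lo_m A g)) (Comp A (lo_e A f) (lo_m A f))"
    using f g fg by (simp add: k_def Comp_assoc)
  also have "\<dots> = Comp A g f"
    using f g by (simp add: comp_lo_e_lo_m)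
  finally have "is_ME_fact A (Comp A g f) (Comp A (lo_m A k) (lo_m A f), Comp A (lo_e A g) (lo_e A k))"
    using f g fg k unfolding is_ME_fact_def by simp
  from ME_fact_unique[OF _ this] f g fg
  show "lo_m A (Comp A g f) = Comp A (lo_m A k) (lo_m A f)"
    and "lo_e A (Comp A g f) = Comp A (lo_e A g) (lo_e A k)" by simp_all
qed

lemma tgt_v_comp:
  "\<lbrakk>f \<in> Arr A; g \<in> Arr A; Cod A f = Dom A g\<rbrakk>
   \<Longrightarrow> tgt_v A (Comp A g f) = tgt_v A (Comp A (up_e A g) (up_m A f))"
  using up_comp(1)[of f g] cod_up_e[of "Comp A g f"] by simp

lemma src_v_comp:
  "\<lbrakk>f \<in> Arr A; g \<in> Arr A; Cod A f = Dom A g\<rbrakk>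
   \<Longrightarrow> src_v A (Comp A g f) = src_v A (Comp A (lo_m A g) (lo_e A f))"
  using lo_comp(1)[of f g] cod_lo_m[of "Comp A g f"] by simp

end

lemma functor_arr:
  assumes "is_functor R A Lo Lm" "f \<in> Arr R"
  shows "Lm f \<in> Arr A" "Dom A (Lm f) = Lo (Dom R f)" "Cod A (Lm f) = Lo (Cod R f)"
  using assms unfolding is_functor_def by auto

lemma var_functor_obj:
  "\<lbrakk>is_var_functor A C Fo Fm; x \<in> Obj A\<rbrakk> \<Longrightarrow> Fo x \<in> Obj C"
  unfolding is_var_functor_def by auto

lemma var_functor_arr:
  assumes "is_var_functor A C Fo Fm" "f \<in> Arr A"
  shows "Fm f \<in> Arr C" "Dom C (Fm f) = Fo (src_v A f)" "Cod C (Fm f) = Fo (tgt_v A f)"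
  using assms unfolding is_var_functor_def by auto

lemma var_functor_id:
  "\<lbrakk>is_var_functor A C Fo Fm; x \<in> Obj A\<rbrakk> \<Longrightarrow> Fm (Idm A x) = Idm C (Fo x)"
  unfolding is_var_functor_def by auto

section \<open>Functors of variance on a product\<close>

lemma prod_vcat_simps [simp]:
  "Obj (prod_vcat A B) = Obj A \<times> Obj B"
  "Arr (prod_vcat A B) = Arr A \<times> Arr B"
  "Dom (prod_vcat A B) (f, g) = (Dom A f, Dom B g)"
  "Cod (prod_vcat A B) (f, g) = (Cod A f, Cod B g)"
  "Comp (prod_vcat A B) (f', g') (f, g) = (Comp A f' f, Comp B g' g)"
  "Idm (prod_vcat A B) (x, y) = (Idm A x, Idm B y)"
  "Cov (prod_vcat A B) = Cov A \<times> Cov B"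
  "Contra (prod_vcat A B) = Contra A \<times> Contra B"
  unfolding prod_vcat_def by simp_all

lemma prod_vcat_up:
  assumes "is_vcat A" "is_vcat B" "f \<in> Arr A" "g \<in> Arr B"
  shows "up_e (prod_vcat A B) (f, g) = (up_e A f, up_e B g)"
    and "up_m (prod_vcat A B) (f, g) = (up_m A f, up_m B g)"
proof -
  interpret A: variance_category A by (rule variance_category.intro) fact
  interpret B: variance_category B by (rule variance_category.intro) fact
  have factors: "is_EM_fact (prod_vcat A B) (f, g) ((e, e'), (m, m')) \<longleftrightarrow>
        is_EM_fact A f (e, m) \<and> is_EM_fact B g (e', m')" for e e' m m'
    unfolding is_EM_fact_def by auto
  have "(THE p. is_EM_fact (prod_vcat A B) (f, g) p) = ((up_e A f, up_e B g), (up_m A f, up_m B g))"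
  proof (rule the_equality)
    fix p
    assume "is_EM_fact (prod_vcat A B) (f, g) p"
    moreover obtain e e' m m' where "p = ((e, e'), (m, m'))"
      by (metis surj_pair)
    ultimately show "p = ((up_e A f, up_e B g), (up_m A f, up_m B g))"
      using factors A.EM_fact_unique B.EM_fact_unique assms by auto
  qed (use factors A.EM_fact_up B.EM_fact_up assms in simp)
  then show "up_e (prod_vcat A B) (f, g) = (up_e A f, up_e B g)"
    and "up_m (prod_vcat A B) (f, g) = (up_m A f, up_m B g)"
    unfolding up_e_def[of "prod_vcat A B"] up_m_def[of "prod_vcat A B"] by simp_all
qed

lemma prod_vcat_lo:
  assumes "is_vcat A" "is_vcat B" "f \<in> Arr A" "g \<in> Arr B"
  shows "lo_m (prod_vcat A B) (f, g) = (lo_m A f, lo_m B g)"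
    and "lo_e (prod_vcat A B) (f, g) = (lo_e A f, lo_e B g)"
proof -
  interpret A: variance_category A by (rule variance_category.intro) fact
  interpret B: variance_category B by (rule variance_category.intro) fact
  have factors: "is_ME_fact (prod_vcat A B) (f, g) ((m, m'), (e, e')) \<longleftrightarrow>
        is_ME_fact A f (m, e) \<and> is_ME_fact B g (m', e')" for e e' m m'
    unfolding is_ME_fact_def by auto
  have "(THE p. is_ME_fact (prod_vcat A B) (f, g) p) = ((lo_m A f, lo_m B g), (lo_e A f, lo_e B g))"
  proof (rule the_equality)
    fix p
    assume "is_ME_fact (prod_vcat A B) (f, g) p"
    moreover obtain m m' e e' where "p = ((m, m'), (e, e'))"
      by (metis surj_pair)
    ultimately show "p = ((lo_m A f, lo_m B g), (lo_e A f, lo_e B g))"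
      using factors A.ME_fact_unique B.ME_fact_unique assms by auto
  qed (use factors A.ME_fact_lo B.ME_fact_lo assms in simp)
  then show "lo_m (prod_vcat A B) (f, g) = (lo_m A f, lo_m B g)"
    and "lo_e (prod_vcat A B) (f, g) = (lo_e A f, lo_e B g)"
    unfolding lo_m_def[of "prod_vcat A B"] lo_e_def[of "prod_vcat A B"] by simp_all
qed

lemma prod_vcat_src_tgt:
  assumes "is_vcat A" "is_vcat B" "f \<in> Arr A" "g \<in> Arr B"
  shows "src_v (prod_vcat A B) (f, g) = (src_v A f, src_v B g)"
    and "tgt_v (prod_vcat A B) (f, g) = (tgt_v A f, tgt_v B g)"
  using prod_vcat_up[OF assms] prod_vcat_lo[OF assms] unfolding src_v_def tgt_v_def by simp_all

locale var_bifunctor =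
  A: variance_category A + B: variance_category B + C: category C
  for A :: "('oa, 'ma, 'za) vcat_scheme"
    and B :: "('ob, 'mb, 'zb) vcat_scheme"
    and C :: "('oc, 'mc, 'zc) cat_scheme" +
  fixes Fo :: "'oa \<times> 'ob \<Rightarrow> 'oc" and Fm :: "'ma \<times> 'mb \<Rightarrow> 'mc"
  assumes var_functor: "is_var_functor (prod_vcat A B) C Fo Fm"
begin

lemma Fo_obj [simp]: "\<lbrakk>x \<in> Obj A; y \<in> Obj B\<rbrakk> \<Longrightarrow> Fo (x, y) \<in> Obj C"
  using var_functor_obj[OF var_functor, of "(x, y)"] by simp

lemma Fm_arr [simp]: "\<lbrakk>f \<in> Arr A; g \<in> Arr B\<rbrakk> \<Longrightarrow> Fm (f, g) \<in> Arr C"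
  and dom_Fm [simp]: "\<lbrakk>f \<in> Arr A; g \<in> Arr B\<rbrakk> \<Longrightarrow> Dom C (Fm (f, g)) = Fo (src_v A f, src_v B g)"
  and cod_Fm [simp]: "\<lbrakk>f \<in> Arr A; g \<in> Arr B\<rbrakk> \<Longrightarrow> Cod C (Fm (f, g)) = Fo (tgt_v A f, tgt_v B g)"
  using var_functor_arr[OF var_functor, of "(f, g)"] prod_vcat_src_tgt[OF A.is_vcat B.is_vcat] by simp_all

lemma Fm_id [simp]: "\<lbrakk>x \<in> Obj A; y \<in> Obj B\<rbrakk> \<Longrightarrow> Fm (Idm A x, Idm B y) = Idm C (Fo (x, y))"
  using var_functor_id[OF var_functor, of "(x, y)"] by simp

lemma Fm_comp:
  assumes "f \<in> Arr A" "f' \<in> Arr A" "g \<in> Arr B" "g' \<in> Arr B" "Cod A f = Dom A f'" "Cod B g = Dom B g'"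
  shows "Fm (Comp A f' f, Comp B g' g) =
     Comp C (Comp C (Fm (up_e A (Comp A (up_e A f') (up_m A f)), up_e B (Comp B (up_e B g') (up_m B g))))
                    (Fm (f, g)))
            (Fm (lo_m A (Comp A (lo_m A f') (lo_e A f)), lo_m B (Comp B (lo_m B g') (lo_e B g))))"
      (is ?through_first)
    and "Fm (Comp A f' f, Comp B g' g) =
     Comp C (Comp C (Fm (up_m A (Comp A (up_e A f') (up_m A f)), up_m B (Comp B (up_e B g') (up_m B g))))
                    (Fm (f', g')))
            (Fm (lo_e A (Comp A (lo_m A f') (lo_e A f)), lo_e B (Comp B (lo_m B g') (lo_e B g))))"
      (is ?through_second)
proof -
  have "(f, g) \<in> Arr (prod_vcat A B)" "(f', g') \<in> Arr (prod_vcat A B)"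
    "Cod (prod_vcat A B) (f, g) = Dom (prod_vcat A B) (f', g')"
    using assms by simp_all
  note law = var_functor[unfolded is_var_functor_def, THEN conjunct2, THEN conjunct2, THEN conjunct2,
      rule_format, OF this]
  note factors = prod_vcat_up[OF A.is_vcat B.is_vcat] prod_vcat_lo[OF A.is_vcat B.is_vcat]
  show ?through_first
    using law[THEN conjunct1] assms by (simp add: factors)
  show ?through_second
    using law[THEN conjunct2] assms by (simp add: factors)
qed

lemma interchange_cov:
  assumes "e \<in> Cov A" "g \<in> Arr B"
  shows "Comp C (Fm (e, Idm B (tgt_v B g))) (Fm (Idm A (Dom A e), g))
       = Comp C (Fm (Idm A (Cod A e), g)) (Fm (e, Idm B (src_v B g)))"
proof -
  have "Comp C (Fm (e, Idm B (tgt_v B g))) (Fm (Idm A (Dom A e), g)) = Fm (e, g)"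
    using Fm_comp(1)[of "Idm A (Dom A e)" e g "Idm B (Cod B g)"] assms by simp
  also have "\<dots> = Comp C (Fm (Idm A (Cod A e), g)) (Fm (e, Idm B (src_v B g)))"
    using Fm_comp(2)[of e "Idm A (Cod A e)" "Idm B (Dom B g)" g] assms by simp
  finally show ?thesis .
qed

lemma interchange_contra:
  assumes "m \<in> Contra A" "g \<in> Arr B"
  shows "Comp C (Fm (m, Idm B (tgt_v B g))) (Fm (Idm A (Cod A m), g))
       = Comp C (Fm (Idm A (Dom A m), g)) (Fm (m, Idm B (src_v B g)))"
proof -
  have "Comp C (Fm (m, Idm B (tgt_v B g))) (Fm (Idm A (Cod A m), g)) = Fm (m, g)"
    using Fm_comp(2)[of m "Idm A (Cod A m)" "Idm B (Dom B g)" g] assms by simp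
  also have "\<dots> = Comp C (Fm (Idm A (Dom A m), g)) (Fm (m, Idm B (src_v B g)))"
    using Fm_comp(1)[of "Idm A (Dom A m)" m g "Idm B (Cod B g)"] assms by simp
  finally show ?thesis .
qed

lemma var_functor_part:
  assumes "y \<in> Obj B"
  shows "is_var_functor A C (part_obj Fo y) (part_arr B Fm y)"
  unfolding is_var_functor_def part_obj_def part_arr_def
  using assms Fm_comp(1)[of _ _ "Idm B y" "Idm B y"] Fm_comp(2)[of _ _ "Idm B y" "Idm B y"]
  by simp

end

section \<open>Wedges and ends\<close>

locale wedge_setting =
  R: category R + A: variance_category A + C: category C
  for R :: "('r, 's, 'z0) cat_scheme"
    and A :: "('a, 'b, 'z1) vcat_scheme"
    and C :: "('c, 'd, 'z2) cat_scheme" +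
  fixes Lo :: "'r \<Rightarrow> 'a" and Lm :: "'s \<Rightarrow> 'b" and Go :: "'a \<Rightarrow> 'c" and Gm :: "'b \<Rightarrow> 'd"
  assumes span: "is_functor R A Lo Lm"
    and var_functor: "is_var_functor A C Go Gm"
begin

lemma wedge_precomp:
  assumes wedge: "is_wedge R Lo Lm A C Go Gm c \<eta>" and h: "h \<in> Arr C" "Cod C h = c"
  shows "is_wedge R Lo Lm A C Go Gm (Dom C h) (\<lambda>x. Comp C (\<eta> x) h)"
proof -
  have \<eta>: "\<eta> x \<in> Arr C" "Dom C (\<eta> x) = c" "Cod C (\<eta> x) = Go (Lo x)" if "x \<in> Obj R" for x
    using wedge that unfolding is_wedge_def by auto
  have "Comp C (Gm (up_e A (Lm f))) (Comp C (\<eta> (Dom R f)) h)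
      = Comp C (Gm (up_m A (Lm f))) (Comp C (\<eta> (Cod R f)) h)" if f: "f \<in> Arr R" for f
  proof -
    have "Comp C (Gm (up_e A (Lm f))) (\<eta> (Dom R f)) = Comp C (Gm (up_m A (Lm f))) (\<eta> (Cod R f))"
      using wedge f unfolding is_wedge_def by blast
    moreover have "Gm (up_e A (Lm f)) \<in> Arr C" "Dom C (Gm (up_e A (Lm f))) = Go (Lo (Dom R f))"
      "Gm (up_m A (Lm f)) \<in> Arr C" "Dom C (Gm (up_m A (Lm f))) = Go (Lo (Cod R f))"
      using var_functor_arr[OF var_functor] functor_arr[OF span f] by simp_all
    ultimately show ?thesis
      using f h \<eta> by (simp add: C.Comp_assoc)
  qed
  then show ?thesis
    using h \<eta> unfolding is_wedge_def by auto
qed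

lemma end_eqI:
  assumes "is_end R Lo Lm A C Go Gm c \<eta>"
    and "h \<in> Arr C" "h' \<in> Arr C" "Dom C h' = Dom C h" "Cod C h = c" "Cod C h' = c"
    and "\<forall>x\<in>Obj R. Comp C (\<eta> x) h = Comp C (\<eta> x) h'"
  shows "h = h'"
proof -
  have "is_wedge R Lo Lm A C Go Gm (Dom C h) (\<lambda>x. Comp C (\<eta> x) h)"
    using assms(1-2,5) wedge_precomp unfolding is_end_def by blast
  with assms(1) have "\<exists>!k. k \<in> Arr C \<and> Dom C k = Dom C h \<and> Cod C k = c \<and>
      (\<forall>x\<in>Obj R. Comp C (\<eta> x) k = Comp C (\<eta> x) h)"
    unfolding is_end_def by blast
  with assms(2-7) show ?thesis
    by (metis (no_types, lifting))
qed

end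

section \<open>The end as a functor of the parameter\<close>

locale parametrised_end =
  var_bifunctor A B C Fo Fm + R1: category R1
  for A :: "('oa, 'ma, 'za) vcat_scheme"
    and B :: "('ob, 'mb, 'zb) vcat_scheme"
    and C :: "('oc, 'mc, 'zc) cat_scheme"
    and Fo :: "'oa \<times> 'ob \<Rightarrow> 'oc" and Fm :: "'ma \<times> 'mb \<Rightarrow> 'mc"
    and R1 :: "('or, 'mr, 'zr) cat_scheme" +
  fixes L1o :: "'or \<Rightarrow> 'oa" and L1m :: "'mr \<Rightarrow> 'ma"
    and Eo :: "'ob \<Rightarrow> 'oc" and \<omega> :: "'ob \<Rightarrow> 'or \<Rightarrow> 'mc"
  assumes span: "is_functor R1 A L1o L1m"
    and ends: "\<forall>y\<in>Obj B. is_end R1 L1o L1m A C (part_obj Fo y) (part_arr B Fm y) (Eo y) (\<omega> y)"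
begin

lemma wedge_setting_part:
  "y \<in> Obj B \<Longrightarrow> wedge_setting R1 A C L1o L1m (part_obj Fo y) (part_arr B Fm y)"
  using R1.is_cat A.is_vcat C.is_cat span var_functor_part
  by (simp add: wedge_setting_def wedge_setting_axioms_def category_def variance_category_def)

lemma L1_obj [simp]: "x \<in> Obj R1 \<Longrightarrow> L1o x \<in> Obj A"
  using span unfolding is_functor_def by blast

lemma L1_arr [simp]: "f \<in> Arr R1 \<Longrightarrow> L1m f \<in> Arr A"
  and dom_L1 [simp]: "f \<in> Arr R1 \<Longrightarrow> Dom A (L1m f) = L1o (Dom R1 f)"
  and cod_L1 [simp]: "f \<in> Arr R1 \<Longrightarrow> Cod A (L1m f) = L1o (Cod R1 f)"
  using functor_arr[OF span] by simp_all

lemma end_obj [simp]: "y \<in> Obj B \<Longrightarrow> Eo y \<in> Obj C"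
  and \<omega>_arr [simp]: "\<lbrakk>y \<in> Obj B; a \<in> Obj R1\<rbrakk> \<Longrightarrow> \<omega> y a \<in> Arr C"
  and dom_\<omega> [simp]: "\<lbrakk>y \<in> Obj B; a \<in> Obj R1\<rbrakk> \<Longrightarrow> Dom C (\<omega> y a) = Eo y"
  and cod_\<omega> [simp]: "\<lbrakk>y \<in> Obj B; a \<in> Obj R1\<rbrakk> \<Longrightarrow> Cod C (\<omega> y a) = Fo (L1o a, y)"
  using ends unfolding is_end_def is_wedge_def part_obj_def by auto

lemma \<omega>_wedge:
  "\<lbrakk>y \<in> Obj B; f \<in> Arr R1\<rbrakk> \<Longrightarrow>
   Comp C (Fm (up_e A (L1m f), Idm B y)) (\<omega> y (Dom R1 f)) = Comp C (Fm (up_m A (L1m f), Idm B y)) (\<omega> y (Cod R1 f))"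
  using ends unfolding is_end_def is_wedge_def part_arr_def by auto

definition pushed_wedge :: "'mb \<Rightarrow> 'or \<Rightarrow> 'mc" where
  "pushed_wedge g a = Comp C (Fm (Idm A (L1o a), g)) (\<omega> (src_v B g) a)"

lemma pushed_wedge_is_wedge:
  assumes g: "g \<in> Arr B"
  shows "is_wedge R1 L1o L1m A C (part_obj Fo (tgt_v B g)) (part_arr B Fm (tgt_v B g))
           (Eo (src_v B g)) (pushed_wedge g)"
  unfolding is_wedge_def part_obj_def part_arr_def
proof (intro conjI ballI)
  fix f assume f: "f \<in> Arr R1"
  define h s t where "h = L1m f" and "s = src_v B g" and "t = tgt_v B g"
  have h: "h \<in> Arr A" "Dom A h = L1o (Dom R1 f)" "Cod A h = L1o (Cod R1 f)"
    and st: "s \<in> Obj B" "t \<in> Obj B"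
    using f g unfolding h_def s_def t_def by simp_all
  have "Comp C (Fm (up_e A h, Idm B t)) (pushed_wedge g (Dom R1 f))
      = Comp C (Comp C (Fm (up_e A h, Idm B t)) (Fm (Idm A (Dom A (up_e A h)), g))) (\<omega> s (Dom R1 f))"
    unfolding pushed_wedge_def using f g h st by (simp add: C.Comp_assoc s_def t_def)
  also have "\<dots> = Comp C (Comp C (Fm (Idm A (tgt_v A h), g)) (Fm (up_e A h, Idm B s))) (\<omega> s (Dom R1 f))"
    using interchange_cov[of "up_e A h" g] h g unfolding s_def t_def by simp
  also have "\<dots> = Comp C (Fm (Idm A (tgt_v A h), g)) (Comp C (Fm (up_e A h, Idm B s)) (\<omega> s (Dom R1 f)))"
    using f g h st by (simp add: C.Comp_assoc s_def)
  also have "\<dots> = Comp C (Fm (Idm A (tgt_v A h), g)) (Comp C (Fm (up_m A h, Idm B s)) (\<omega> s (Cod R1 f)))"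
    using \<omega>_wedge[OF st(1) f] unfolding h_def by simp
  also have "\<dots> = Comp C (Comp C (Fm (Idm A (Dom A (up_m A h)), g)) (Fm (up_m A h, Idm B s))) (\<omega> s (Cod R1 f))"
    using f g h st by (simp add: C.Comp_assoc s_def)
  also have "\<dots> = Comp C (Comp C (Fm (up_m A h, Idm B t)) (Fm (Idm A (Cod A h), g))) (\<omega> s (Cod R1 f))"
    using interchange_contra[of "up_m A h" g] h g unfolding s_def t_def by simp
  also have "\<dots> = Comp C (Fm (up_m A h, Idm B t)) (pushed_wedge g (Cod R1 f))"
    unfolding pushed_wedge_def using f g h st by (simp add: C.Comp_assoc s_def t_def)
  finally show "Comp C (Fm (up_e A (L1m f), Idm B t)) (pushed_wedge g (Dom R1 f))
      = Comp C (Fm (up_m A (L1m f), Idm B t)) (pushed_wedge g (Cod R1 f))"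
    unfolding h_def .
qed (use g in \<open>auto simp: pushed_wedge_def\<close>)

lemma end_factor_unique:
  assumes "y \<in> Obj B" "is_wedge R1 L1o L1m A C (part_obj Fo y) (part_arr B Fm y) d \<theta>"
  shows "\<exists>!h. h \<in> Arr C \<and> Dom C h = d \<and> Cod C h = Eo y \<and> (\<forall>a\<in>Obj R1. Comp C (\<omega> y a) h = \<theta> a)"
  using ends assms unfolding is_end_def by blast

definition end_arr :: "'mb \<Rightarrow> 'mc" where
  "end_arr g = (THE h. h \<in> Arr C \<and> Dom C h = Eo (src_v B g) \<and> Cod C h = Eo (tgt_v B g) \<and>
      (\<forall>a\<in>Obj R1. Comp C (\<omega> (tgt_v B g) a) h = pushed_wedge g a))"

lemma end_arr_spec:
  assumes "g \<in> Arr B"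
  shows "end_arr g \<in> Arr C \<and> Dom C (end_arr g) = Eo (src_v B g) \<and> Cod C (end_arr g) = Eo (tgt_v B g) \<and>
      (\<forall>a\<in>Obj R1. Comp C (\<omega> (tgt_v B g) a) (end_arr g) = pushed_wedge g a)"
  unfolding end_arr_def
  using theI'[OF end_factor_unique[OF _ pushed_wedge_is_wedge]] assms by simp

lemma end_arr_arr [simp]: "g \<in> Arr B \<Longrightarrow> end_arr g \<in> Arr C"
  and dom_end_arr [simp]: "g \<in> Arr B \<Longrightarrow> Dom C (end_arr g) = Eo (src_v B g)"
  and cod_end_arr [simp]: "g \<in> Arr B \<Longrightarrow> Cod C (end_arr g) = Eo (tgt_v B g)"
  using end_arr_spec by simp_all

lemma end_arr_natural:
  "\<lbrakk>g \<in> Arr B; a \<in> Obj R1\<rbrakk> \<Longrightarrow>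
   Comp C (\<omega> (tgt_v B g) a) (end_arr g) = Comp C (Fm (Idm A (L1o a), g)) (\<omega> (src_v B g) a)"
  using end_arr_spec unfolding pushed_wedge_def by blast

lemma end_arr_unique:
  assumes g: "g \<in> Arr B"
    and h: "h \<in> Arr C" "Dom C h = Eo (src_v B g)" "Cod C h = Eo (tgt_v B g)"
    and natural: "\<forall>a\<in>Obj R1. Comp C (\<omega> (tgt_v B g) a) h = Comp C (Fm (Idm A (L1o a), g)) (\<omega> (src_v B g) a)"
  shows "h = end_arr g"
proof -
  have y: "tgt_v B g \<in> Obj B"
    using g by simp
  show ?thesis
    using wedge_setting.end_eqI[OF wedge_setting_part[OF y] ends[rule_format, OF y], of h "end_arr g"]
      g h natural end_arr_natural by simp
qed

lemma end_arr_id: "y \<in> Obj B \<Longrightarrow> end_arr (Idm B y) = Idm C (Eo y)"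
  by (rule sym, rule end_arr_unique) simp_all

lemma end_arr_paste:
  "\<lbrakk>g \<in> Arr B; a \<in> Obj R1; u \<in> Arr C; Cod C u = Eo (src_v B g)\<rbrakk> \<Longrightarrow>
   Comp C (\<omega> (tgt_v B g) a) (Comp C (end_arr g) u) = Comp C (Fm (Idm A (L1o a), g)) (Comp C (\<omega> (src_v B g) a) u)"
  by (simp add: C.Comp_assoc end_arr_natural)

lemma end_arr_comp3:
  assumes k: "k \<in> Arr B" and g: "g \<in> Arr B" and j: "j \<in> Arr B"
    and kg: "tgt_v B k = src_v B g" and gj: "tgt_v B g = src_v B j"
    and h: "h \<in> Arr B" "src_v B h = src_v B k" "tgt_v B h = tgt_v B j"
    and F: "\<forall>x\<in>Obj A. Fm (Idm A x, h) = Comp C (Comp C (Fm (Idm A x, j)) (Fm (Idm A x, g))) (Fm (Idm A x, k))"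
  shows "end_arr h = Comp C (Comp C (end_arr j) (end_arr g)) (end_arr k)"
proof (rule sym, rule end_arr_unique)
  show "\<forall>a\<in>Obj R1. Comp C (\<omega> (tgt_v B h) a) (Comp C (Comp C (end_arr j) (end_arr g)) (end_arr k))
      = Comp C (Fm (Idm A (L1o a), h)) (\<omega> (src_v B h) a)"
  proof
    fix a assume a: "a \<in> Obj R1"
    define I where "I = Idm A (L1o a)"
    have "Comp C (\<omega> (tgt_v B h) a) (Comp C (Comp C (end_arr j) (end_arr g)) (end_arr k))
        = Comp C (\<omega> (tgt_v B j) a) (Comp C (end_arr j) (Comp C (end_arr g) (end_arr k)))"
      using k g j kg gj h by (simp add: C.Comp_assoc)
    also have "\<dots> = Comp C (Fm (I, j)) (Comp C (\<omega> (tgt_v B g) a) (Comp C (end_arr g) (end_arr k)))"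
      using end_arr_paste[of j a "Comp C (end_arr g) (end_arr k)"] k g j kg gj a unfolding I_def by simp
    also have "\<dots> = Comp C (Fm (I, j)) (Comp C (Fm (I, g)) (Comp C (\<omega> (tgt_v B k) a) (end_arr k)))"
      using end_arr_paste[of g a "end_arr k"] k g kg a unfolding I_def by simp
    also have "\<dots> = Comp C (Fm (I, j)) (Comp C (Fm (I, g)) (Comp C (Fm (I, k)) (\<omega> (src_v B k) a)))"
      using end_arr_natural[OF k a] unfolding I_def by simp
    also have "\<dots> = Comp C (Fm (I, h)) (\<omega> (src_v B h) a)"
      using F k g j kg gj h a unfolding I_def by (simp add: C.Comp_assoc)
    finally show "Comp C (\<omega> (tgt_v B h) a) (Comp C (Comp C (end_arr j) (end_arr g)) (end_arr k))
        = Comp C (Fm (Idm A (L1o a), h)) (\<omega> (src_v B h) a)"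
      unfolding I_def .
  qed
qed (use k g j kg gj h in simp_all)

lemma end_arr_comp:
  assumes g: "g \<in> Arr B" and g': "g' \<in> Arr B" and gg': "Cod B g = Dom B g'"
  defines "j \<equiv> Comp B (up_e B g') (up_m B g)" and "k \<equiv> Comp B (lo_m B g') (lo_e B g)"
  shows "end_arr (Comp B g' g) = Comp C (Comp C (end_arr (up_e B j)) (end_arr g)) (end_arr (lo_m B k))"
    and "end_arr (Comp B g' g) = Comp C (Comp C (end_arr (up_m B j)) (end_arr g')) (end_arr (lo_e B k))"
proof -
  have j: "j \<in> Arr B" "Dom B j = tgt_v B g" "Cod B j = tgt_v B g'"
    and k: "k \<in> Arr B" "Dom B k = src_v B g" "Cod B k = src_v B g'"
    using g g' gg' unfolding j_def k_def by simp_all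
  have st: "src_v B (Comp B g' g) = src_v B k" "tgt_v B (Comp B g' g) = tgt_v B j"
    using B.src_v_comp[OF g g' gg'] B.tgt_v_comp[OF g g' gg'] unfolding j_def k_def by simp_all
  have F1: "Fm (Idm A x, Comp B g' g)
           = Comp C (Comp C (Fm (Idm A x, up_e B j)) (Fm (Idm A x, g))) (Fm (Idm A x, lo_m B k))"
    and F2: "Fm (Idm A x, Comp B g' g)
           = Comp C (Comp C (Fm (Idm A x, up_m B j)) (Fm (Idm A x, g'))) (Fm (Idm A x, lo_e B k))"
    if "x \<in> Obj A" for x
    using Fm_comp[of "Idm A x" "Idm A x" g g'] that g g' gg' unfolding j_def k_def by simp_all
  show "end_arr (Comp B g' g) = Comp C (Comp C (end_arr (up_e B j)) (end_arr g)) (end_arr (lo_m B k))"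
    by (rule end_arr_comp3) (use g g' gg' j k st F1 in simp_all)
  show "end_arr (Comp B g' g) = Comp C (Comp C (end_arr (up_m B j)) (end_arr g')) (end_arr (lo_e B k))"
    by (rule end_arr_comp3) (use g g' gg' j k st F2 in simp_all)
qed

lemma var_functor_end_arr: "is_var_functor B C Eo end_arr"
  unfolding is_var_functor_def using end_arr_id end_arr_comp by simp

end

theorem mainTheorem5:
  fixes A :: "('oa, 'ma, 'za) vcat_scheme"
    and B :: "('ob, 'mb, 'zb) vcat_scheme"
    and C :: "('oc, 'mc, 'zc) cat_scheme"
    and R1 :: "('or, 'mr, 'zr) cat_scheme"
    and L1o :: "'or \<Rightarrow> 'oa" and L1m :: "'mr \<Rightarrow> 'ma"
    and Fo :: "'oa \<times> 'ob \<Rightarrow> 'oc" and Fm :: "'ma \<times> 'mb \<Rightarrow> 'mc"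
    and Eo :: "'ob \<Rightarrow> 'oc"
    and \<omega> :: "'ob \<Rightarrow> 'or \<Rightarrow> 'mc"
  assumes "is_vcat A" and "is_vcat B" and "is_cat C"
    and "is_cat R1" and "is_functor R1 A L1o L1m"
    and "is_var_functor (prod_vcat A B) C Fo Fm"
    and "\<forall>y\<in>Obj B. is_end R1 L1o L1m A C (part_obj Fo y) (part_arr B Fm y) (Eo y) (\<omega> y)"
  shows "\<exists>Gm. is_var_functor B C Eo Gm \<and>
           (\<forall>a\<in>Obj R1. \<forall>g\<in>Arr B.
              Comp C (Fm (Idm A (L1o a), g)) (\<omega> (src_v B g) a) = Comp C (\<omega> (tgt_v B g) a) (Gm g)) \<and>
           (\<forall>Gm'. is_var_functor B C Eo Gm' \<and>
              (\<forall>a\<in>Obj R1. \<forall>g\<in>Arr B.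
                 Comp C (Fm (Idm A (L1o a), g)) (\<omega> (src_v B g) a) = Comp C (\<omega> (tgt_v B g) a) (Gm' g))
              \<longrightarrow> (\<forall>g\<in>Arr B. Gm' g = Gm g))"
proof -
  interpret parametrised_end A B C Fo Fm R1 L1o L1m Eo \<omega>
    using assms by unfold_locales auto
  have natural: "\<forall>a\<in>Obj R1. \<forall>g\<in>Arr B.
      Comp C (Fm (Idm A (L1o a), g)) (\<omega> (src_v B g) a) = Comp C (\<omega> (tgt_v B g) a) (end_arr g)"
    using end_arr_natural by simp
  have unique: "Gm' g = end_arr g"
    if "is_var_functor B C Eo Gm'"
      and "\<forall>a\<in>Obj R1. \<forall>g\<in>Arr B.
        Comp C (Fm (Idm A (L1o a), g)) (\<omega> (src_v B g) a) = Comp C (\<omega> (tgt_v B g) a) (Gm' g)"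
      and "g \<in> Arr B" for Gm' g
    using end_arr_unique[of g "Gm' g"] var_functor_arr[OF that(1,3)] that(2,3) by simp
  show ?thesis
    using var_functor_end_arr natural unique by blast
qed

end
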